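(* Let $n,t \ge 1$ be integers, and let $G$ be a simple graph on $n$ vertices such that no forest on $2t+1$ vertices is an induced subgraph of $G$. Then $|E(G)| \ge g(n,t)$. If equality holds and $n < 4t$, then every component of $G$ is a complete graph on $1$, $3$ or $4$ vertices. If equality holds and $n \ge 4t$, then $G \cong G_{n,t}$.
   Context: The function $g:\mathbb{N}\times\mathbb{N}\to\mathbb{N}$ is defined recursively by: $g(n,t) = 0$ for $n < 2t$; $g(n,t) = 3(n-2t)$ for $2t \le n \le 4t$; and $g(n,t) = g(n-1,t) + \lceil n/t \rceil - 1$ for $n > 4t$. $G_{n,t}$ denotes the graph on $n$ vertices which is a disjoint union of $t$ complete graphs whose numbers of vertices pairwise differ by at most one. *)

theory Defs
  imports Complex_Main
begin

fun g :: "nat \<Rightarrow> nat \<Rightarrow> nat" where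
  "g n t = (if n < 2*t then 0
            else if n \<le> 4*t then 3*(n - 2*t)
            else g (n - 1) t + nat \<lceil>real n / real t\<rceil> - 1)"

definition simple_graph :: "'a set \<Rightarrow> ('a \<Rightarrow> 'a \<Rightarrow> bool) \<Rightarrow> bool" where
  "simple_graph V E \<longleftrightarrow> finite V \<and> (\<forall>u w. E u w \<longrightarrow> u \<in> V \<and> w \<in> V)
     \<and> (\<forall>u w. E u w \<longrightarrow> E w u) \<and> (\<forall>u. \<not> E u u)"

definition edges :: "'a set \<Rightarrow> ('a \<Rightarrow> 'a \<Rightarrow> bool) \<Rightarrow> 'a set set" where
  "edges V E = {{u, w} | u w. u \<in> V \<and> w \<in> V \<and> E u w}"

definition is_cycle_in :: "'a set \<Rightarrow> ('a \<Rightarrow> 'a \<Rightarrow> bool) \<Rightarrow> 'a list \<Rightarrow> bool" where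
  "is_cycle_in S E vs \<longleftrightarrow> length vs \<ge> 3 \<and> distinct vs \<and> set vs \<subseteq> S
     \<and> (\<forall>i. Suc i < length vs \<longrightarrow> E (vs ! i) (vs ! Suc i))
     \<and> E (last vs) (hd vs)"

definition induced_forest :: "'a set \<Rightarrow> ('a \<Rightarrow> 'a \<Rightarrow> bool) \<Rightarrow> bool" where
  "induced_forest S E \<longleftrightarrow> (\<nexists>vs. is_cycle_in S E vs)"

definition has_induced_forest :: "'a set \<Rightarrow> ('a \<Rightarrow> 'a \<Rightarrow> bool) \<Rightarrow> nat \<Rightarrow> bool" where
  "has_induced_forest V E k \<longleftrightarrow> (\<exists>S \<subseteq> V. card S = k \<and> induced_forest S E)"

definition component :: "'a set \<Rightarrow> ('a \<Rightarrow> 'a \<Rightarrow> bool) \<Rightarrow> 'a \<Rightarrow> 'a set" where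
  "component V E v = {u \<in> V. (\<lambda>x y. E x y \<and> x \<in> V \<and> y \<in> V)\<^sup>*\<^sup>* v u}"

definition components :: "'a set \<Rightarrow> ('a \<Rightarrow> 'a \<Rightarrow> bool) \<Rightarrow> 'a set set" where
  "components V E = component V E ` V"

definition is_clique :: "'a set \<Rightarrow> ('a \<Rightarrow> 'a \<Rightarrow> bool) \<Rightarrow> bool" where
  "is_clique C E \<longleftrightarrow> (\<forall>u\<in>C. \<forall>w\<in>C. u \<noteq> w \<longrightarrow> E u w)"

text \<open>G_{n,t}: vertices {0..<n}, vertex i in part (i mod t); t cliques whose sizes
  pairwise differ by at most one.\<close>
definition Gnt_adj :: "nat \<Rightarrow> nat \<Rightarrow> nat \<Rightarrow> bool" where
  "Gnt_adj t i j \<longleftrightarrow> i \<noteq> j \<and> i mod t = j mod t"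

definition graph_iso :: "'a set \<Rightarrow> ('a \<Rightarrow> 'a \<Rightarrow> bool) \<Rightarrow> 'b set \<Rightarrow> ('b \<Rightarrow> 'b \<Rightarrow> bool) \<Rightarrow> bool" where
  "graph_iso V E W F \<longleftrightarrow> (\<exists>f. bij_betw f V W \<and> (\<forall>u\<in>V. \<forall>w\<in>V. E u w \<longleftrightarrow> F (f u) (f w)))"

end

(*
  By the theorem of Alon, Kahn and Seymour, every graph has an induced forest on at least
  sum_v w(d(v)) vertices, where w(d) = min 1 (2 / (d + 1)), and the bound is strict unless the
  graph is a disjoint union of cliques; so here the weight sum H is at most 2t. For q >= 3 the
  secant inequality 2d + q(q + 1) w(d) >= 4q, summed over all vertices, gives
  4 |E| >= 4qn - q(q + 1) H >= 4qn - 2t q(q + 1), which is 4 g(n, t) for q = 3 when n < 4t and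
  for q = n div t when n >= 4t. Equality forces H = 2t, hence a disjoint union of cliques, and
  every degree on the secant: in {0, 2, 3}, respectively in {q - 1, q} with exactly t cliques.
*)
theory Submission
  imports Defs "HOL-Library.Disjoint_Sets"
begin

definition deg :: "'a set \<Rightarrow> ('a \<Rightarrow> 'a \<Rightarrow> bool) \<Rightarrow> 'a \<Rightarrow> nat" where
  "deg V E v = card {u \<in> V. E v u}"

lemma simple_graphD:
  assumes "simple_graph V E"
  shows "finite V" "symp E" "irreflp E" "E u w \<Longrightarrow> u \<in> V" "E u w \<Longrightarrow> w \<in> V"
  using assms unfolding simple_graph_def symp_def irreflp_def by blast+

lemma finite_edges: "finite V \<Longrightarrow> finite (edges V E)"
  unfolding edges_def by (rule finite_subset[of _ "Pow V"]) auto

lemma handshake: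
  assumes "simple_graph V E"
  shows "(\<Sum>v\<in>V. deg V E v) = 2 * card (edges V E)"
proof -
  have fin: "finite V" and sym: "symp E" using simple_graphD[OF assms] by auto
  have "deg V E v = card {e \<in> edges V E. v \<in> e}" if v: "v \<in> V" for v
  proof -
    have "bij_betw (\<lambda>u. {v, u}) {u \<in> V. E v u} {e \<in> edges V E. v \<in> e}"
    proof (rule bij_betwI')
      show "\<And>u u'. ({v, u} = {v, u'}) = (u = u')" by (auto simp: doubleton_eq_iff)
      show "{v, u} \<in> {e \<in> edges V E. v \<in> e}" if "u \<in> {u \<in> V. E v u}" for u
        using that v unfolding edges_def by auto
      show "\<exists>u\<in>{u \<in> V. E v u}. e = {v, u}" if "e \<in> {e \<in> edges V E. v \<in> e}" for e
        using that sym unfolding edges_def by (auto dest: sympD)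
    qed
    then show ?thesis unfolding deg_def by (rule bij_betw_same_card)
  qed
  then have "(\<Sum>v\<in>V. deg V E v) = (\<Sum>v\<in>V. \<Sum>e\<in>edges V E. if v \<in> e then 1 else 0)"
    using finite_edges[OF fin] by (intro sum.cong) (simp_all add: sum.If_cases Int_def)
  also have "\<dots> = (\<Sum>e\<in>edges V E. \<Sum>v\<in>V. if v \<in> e then 1 else 0)"
    by (rule sum.swap)
  also have "\<dots> = (\<Sum>e\<in>edges V E. 2)"
  proof (rule sum.cong)
    fix e assume "e \<in> edges V E"
    then obtain u w where "e = {u, w}" "u \<in> V" "w \<in> V" "u \<noteq> w"
      using simple_graphD(3)[OF assms] unfolding edges_def irreflp_def by blast
    moreover have "V \<inter> {v. v \<in> e} = e" using \<open>e = {u, w}\<close> \<open>u \<in> V\<close> \<open>w \<in> V\<close> by auto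
    ultimately show "(\<Sum>v\<in>V. if v \<in> e then 1 else 0) = (2::nat)"
      using fin by (simp add: sum.If_cases)
  qed simp
  finally show ?thesis by simp
qed

lemma cycle_vertex_two_neighbours:
  assumes "is_cycle_in S E vs" "z \<in> set vs"
  obtains x y where "x \<in> set vs" "y \<in> set vs" "x \<noteq> y" "E z x" "E y z"
proof -
  define k where "k = length vs"
  have k: "k \<ge> 3" and dist: "distinct vs" using assms(1) unfolding is_cycle_in_def k_def by auto
  have step: "E (vs ! i) (vs ! ((i + 1) mod k))" if "i < k" for i
  proof (cases "Suc i < k")
    case True
    then show ?thesis using assms(1) unfolding is_cycle_in_def k_def by auto
  next
    case False
    then have "i = k - 1" "vs \<noteq> []" using that k unfolding k_def by auto
    then show ?thesis using assms(1) unfolding is_cycle_in_def k_def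
      by (simp add: last_conv_nth hd_conv_nth)
  qed
  obtain i where i: "i < k" "vs ! i = z" using assms(2) unfolding k_def by (metis in_set_conv_nth)
  define h where "h = (i + 1) mod k"
  define j where "j = (i + k - 1) mod k"
  have hj: "h < k" "j < k" "(j + 1) mod k = i"
    using i k unfolding h_def j_def by (auto simp: mod_Suc_eq)
  have "h \<noteq> j" using i k unfolding h_def j_def by (auto simp: mod_if)
  then have "vs ! h \<noteq> vs ! j" using dist hj unfolding k_def by (simp add: nth_eq_iff_index_eq)
  moreover have "E z (vs ! h)" "E (vs ! j) z"
    using step[of i] step[of j] i hj unfolding h_def by auto
  ultimately show ?thesis using that[of "vs ! h" "vs ! j"] hj unfolding k_def by simp
qed

lemma induced_forest_subset: "induced_forest S E \<Longrightarrow> T \<subseteq> S \<Longrightarrow> induced_forest T E"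
  unfolding induced_forest_def is_cycle_in_def by blast

lemma induced_forest_insert:
  assumes "induced_forest S E" "S \<subseteq> V" "z \<in> V" "finite V" "symp E" "deg V E z \<le> 1"
  shows "induced_forest (insert z S) E"
  unfolding induced_forest_def
proof
  assume "\<exists>vs. is_cycle_in (insert z S) E vs"
  then obtain vs where vs: "is_cycle_in (insert z S) E vs" by blast
  show False
  proof (cases "z \<in> set vs")
    case True
    then obtain x y where "x \<in> set vs" "y \<in> set vs" "x \<noteq> y" "E z x" "E y z"
      by (rule cycle_vertex_two_neighbours[OF vs])
    moreover have "set vs \<subseteq> V" using vs assms(2,3) unfolding is_cycle_in_def by auto
    ultimately have "{x, y} \<subseteq> {u \<in> V. E z u}" using sympD[OF assms(5), of y z] by auto
    then have "card {x, y} \<le> deg V E z" unfolding deg_def using assms(4) by (intro card_mono) auto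
    then show False using \<open>x \<noteq> y\<close> assms(6) by simp
  next
    case False
    then have "is_cycle_in S E vs" using vs unfolding is_cycle_in_def by auto
    then show False using assms(1) unfolding induced_forest_def by blast
  qed
qed

lemma induced_forest_non_adjacent_triple:
  assumes "symp E" "irreflp E" "\<not> E a b"
  shows "induced_forest {a, b, c} E"
  unfolding induced_forest_def
proof
  assume "\<exists>vs. is_cycle_in {a, b, c} E vs"
  then obtain vs where vs: "is_cycle_in {a, b, c} E vs" by blast
  have "card {a, b, c} \<le> 3" using card_length[of "[a, b, c]"] by simp
  then have "card {a, b, c} \<le> card (set vs)"
    using vs unfolding is_cycle_in_def by (simp add: distinct_card)
  then have "set vs = {a, b, c}" using vs unfolding is_cycle_in_def by (intro card_seteq) auto
  then obtain x y where xy: "x \<in> {a, b, c}" "y \<in> {a, b, c}" "x \<noteq> y" "E a x" "E y a"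
    using cycle_vertex_two_neighbours[OF vs, of a] by auto
  moreover have "x \<noteq> a" "y \<noteq> a" using xy(4,5) assms(2) by (auto simp: irreflp_def)
  ultimately have "x = b \<or> y = b" by auto
  then show False using xy(4,5) assms(3) sympD[OF assms(1), of b a] by auto
qed

lemma card_induced_forest_le:
  assumes "\<not> has_induced_forest V E (Suc k)" "S \<subseteq> V" "induced_forest S E"
  shows "card S \<le> k"
proof (rule ccontr)
  assume "\<not> card S \<le> k"
  then obtain T where "T \<subseteq> S" "card T = Suc k" using obtain_subset_with_card_n[of "Suc k" S] by auto
  then have "has_induced_forest V E (Suc k)"
    unfolding has_induced_forest_def using assms(2) induced_forest_subset[OF assms(3)] by blast
  then show False using assms(1) by contradiction
qed

section \<open>The Alon-Kahn-Seymour bound\<close>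

definition aks_weight :: "nat \<Rightarrow> real" where
  "aks_weight d = (if d \<le> 1 then 1 else 2 / (real d + 1))"

definition forest_weight :: "'a set \<Rightarrow> ('a \<Rightarrow> 'a \<Rightarrow> bool) \<Rightarrow> real" where
  "forest_weight V E = (\<Sum>v\<in>V. aks_weight (deg V E v))"

text \<open>Deleting z changes the weight bound by the removal gain, z itself being credited when
  deg z \<le> 1 because it can then be added back to any induced forest of the rest. Since the gains
  sum to zero, some vertex can always be deleted without loss.\<close>
definition removal_gain :: "'a set \<Rightarrow> ('a \<Rightarrow> 'a \<Rightarrow> bool) \<Rightarrow> 'a \<Rightarrow> real" where
  "removal_gain V E z =
     forest_weight (V - {z}) E + (if deg V E z \<le> 1 then 1 else 0) - forest_weight V E"

definition cluster_graph :: "'a set \<Rightarrow> ('a \<Rightarrow> 'a \<Rightarrow> bool) \<Rightarrow> bool" where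
  "cluster_graph V E \<longleftrightarrow> (\<forall>a\<in>V. \<forall>b\<in>V. \<forall>c\<in>V. E a c \<longrightarrow> E c b \<longrightarrow> a \<noteq> b \<longrightarrow> E a b)"

lemma deg_Diff_singleton:
  assumes "finite V" "u \<in> V - {z}"
  shows "deg (V - {z}) E u = (if E u z \<and> z \<in> V then deg V E u - 1 else deg V E u)"
proof -
  have "{w \<in> V - {z}. E u w} = {w \<in> V. E u w} - {z}" by auto
  then show ?thesis unfolding deg_def using assms by (auto simp: card_Diff_singleton_if)
qed

lemma removal_gain_eq:
  assumes "finite V" "z \<in> V" "irreflp E"
  shows "removal_gain V E z =
    (\<Sum>u\<in>V. if E u z then aks_weight (deg V E u - 1) - aks_weight (deg V E u) else 0)
      + (if deg V E z \<le> 1 then 1 else 0) - aks_weight (deg V E z)"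
proof -
  let ?drop = "\<lambda>u. if E u z then aks_weight (deg V E u - 1) - aks_weight (deg V E u) else 0"
  have "forest_weight (V - {z}) E = (\<Sum>u\<in>V - {z}. aks_weight (deg V E u) + ?drop u)"
    unfolding forest_weight_def using assms(1,2) by (intro sum.cong) (auto simp: deg_Diff_singleton)
  also have "\<dots> = (\<Sum>u\<in>V - {z}. aks_weight (deg V E u)) + (\<Sum>u\<in>V. ?drop u)"
    using assms by (simp add: sum.distrib sum_diff1 irreflpD)
  also have "\<dots> = forest_weight V E - aks_weight (deg V E z) + (\<Sum>u\<in>V. ?drop u)"
    unfolding forest_weight_def using assms(1,2) by (simp add: sum_diff1)
  finally show ?thesis unfolding removal_gain_def by simp
qed

text \<open>This identity, which singles out the weights, makes the removal gains sum to zero.\<close>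
lemma aks_weight_balance:
  "real d * (aks_weight (d - 1) - aks_weight d) + (if d \<le> 1 then 1 else 0) = aks_weight d"
proof -
  consider "d \<le> 1" | "d = 2" | "d \<ge> 3" by linarith
  then show ?thesis
  proof cases
    case 3
    then have "aks_weight (d - 1) = 2 / real d" unfolding aks_weight_def by (auto simp: of_nat_diff)
    with 3 show ?thesis unfolding aks_weight_def by (simp add: field_simps)
  qed (auto simp: aks_weight_def)
qed

lemma sum_removal_gain:
  assumes "finite V" "irreflp E"
  shows "(\<Sum>z\<in>V. removal_gain V E z) = 0"
proof -
  let ?drop = "\<lambda>u. aks_weight (deg V E u - 1) - aks_weight (deg V E u)"
  let ?own = "\<lambda>z. (if deg V E z \<le> 1 then 1 else 0) - aks_weight (deg V E z)"
  have "(\<Sum>z\<in>V. removal_gain V E z) = (\<Sum>z\<in>V. (\<Sum>u\<in>V. if E u z then ?drop u else 0) + ?own z)"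
    using assms by (intro sum.cong) (simp_all add: removal_gain_eq)
  also have "\<dots> = (\<Sum>z\<in>V. \<Sum>u\<in>V. if E u z then ?drop u else 0) + (\<Sum>z\<in>V. ?own z)"
    by (rule sum.distrib)
  also have "(\<Sum>z\<in>V. \<Sum>u\<in>V. if E u z then ?drop u else 0)
      = (\<Sum>u\<in>V. \<Sum>z\<in>V. if E u z then ?drop u else 0)"
    by (rule sum.swap)
  also have "\<dots> = (\<Sum>u\<in>V. real (deg V E u) * ?drop u)"
    unfolding deg_def using assms(1) by (simp add: sum.If_cases Int_def conj_commute)
  finally show ?thesis
    using aks_weight_balance by (simp add: sum.distrib[symmetric] algebra_simps)
qed

lemma removal_gain_eq_0_if_nonpos:
  assumes "finite V" "irreflp E" "\<forall>z\<in>V. removal_gain V E z \<le> 0" "z \<in> V"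
  shows "removal_gain V E z = 0"
proof -
  have "(\<Sum>z\<in>V. - removal_gain V E z) = 0"
    using sum_removal_gain[OF assms(1,2)] by (simp add: sum_negf)
  then show ?thesis
    using sum_nonneg_eq_0_iff[OF assms(1), of "\<lambda>z. - removal_gain V E z"] assms(3,4) by force
qed

lemma induced_forest_removal_step:
  assumes "finite V" "symp E" "z \<in> V" "S' \<subseteq> V - {z}" "induced_forest S' E"
  obtains S where "S \<subseteq> V" "induced_forest S E"
    "real (card S') - forest_weight (V - {z}) E + removal_gain V E z
       \<le> real (card S) - forest_weight V E"
proof (cases "deg V E z \<le> 1")
  case True
  have "induced_forest (insert z S') E"
    using induced_forest_insert[OF assms(5) _ assms(3,1,2) True] assms(4) by blast
  moreover have "z \<notin> S'" "finite S'" using assms(1,4) finite_subset[of S' V] by auto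
  then have "card (insert z S') = card S' + 1" by simp
  ultimately show ?thesis
    using that[of "insert z S'"] True assms(3,4) unfolding removal_gain_def by auto
next
  case False
  then show ?thesis using that[of S'] assms(4,5) unfolding removal_gain_def by auto
qed

theorem exists_induced_forest_weight:
  assumes "finite V" "symp E" "irreflp E"
  obtains S where "S \<subseteq> V" "induced_forest S E" "forest_weight V E \<le> real (card S)"
  using assms(1)
proof (induction V arbitrary: thesis rule: finite_psubset_induct)
  case (psubset V)
  show ?case
  proof (cases "V = {}")
    case True
    then show ?thesis
      using psubset.prems(1)[of "{}"] unfolding induced_forest_def is_cycle_in_def forest_weight_def
      by auto
  next
    case False
    have "\<exists>z\<in>V. removal_gain V E z \<ge> 0"
      using removal_gain_eq_0_if_nonpos[OF psubset.hyps(1) assms(3)] False by force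
    then obtain z where z: "z \<in> V" "removal_gain V E z \<ge> 0" by blast
    obtain S' where S': "S' \<subseteq> V - {z}" "induced_forest S' E"
      "forest_weight (V - {z}) E \<le> real (card S')"
      using psubset.IH[of "V - {z}"] z(1) by blast
    obtain S where "S \<subseteq> V" "induced_forest S E"
      "real (card S') - forest_weight (V - {z}) E + removal_gain V E z
         \<le> real (card S) - forest_weight V E"
      by (rule induced_forest_removal_step[OF psubset.hyps(1) assms(2) z(1) S'(1,2)])
    with S'(3) z(2) show ?thesis by (intro psubset.prems(1)) auto
  qed
qed

lemma forest_weight_path_less_card:
  assumes "symp E" "irreflp E" "E a c" "E c b" "a \<noteq> b"
  shows "forest_weight {a, b, c} E < real (card {a, b, c})"
proof -
  have "a \<noteq> c" "b \<noteq> c" using assms(2-4) by (auto simp: irreflp_def)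
  have "{u \<in> {a, b, c}. E c u} = {a, b}"
    using assms(3,4) sympD[OF assms(1), of a c] assms(2) by (auto simp: irreflp_def)
  then have "aks_weight (deg {a, b, c} E c) = 2 / 3"
    unfolding deg_def aks_weight_def using assms(5) by simp
  moreover have w1: "aks_weight d \<le> 1" for d unfolding aks_weight_def by auto
  moreover have "forest_weight {a, b, c} E = aks_weight (deg {a, b, c} E a)
      + aks_weight (deg {a, b, c} E b) + aks_weight (deg {a, b, c} E c)"
    "card {a, b, c} = 3"
    unfolding forest_weight_def using assms(5) \<open>a \<noteq> c\<close> \<open>b \<noteq> c\<close> by simp_all
  ultimately show ?thesis using w1[of "deg {a, b, c} E a"] w1[of "deg {a, b, c} E b"] by linarith
qed

theorem exists_induced_forest_weight_strict:
  assumes "finite V" "symp E" "irreflp E" "\<not> cluster_graph V E"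
  obtains S where "S \<subseteq> V" "induced_forest S E" "forest_weight V E < real (card S)"
  using assms(1,4)
proof (induction V arbitrary: thesis rule: finite_psubset_induct)
  case (psubset V)
  obtain a b c where abc: "a \<in> V" "b \<in> V" "c \<in> V" "E a c" "E c b" "a \<noteq> b" "\<not> E a b"
    using psubset.prems(2) unfolding cluster_graph_def by blast
  show ?case
  proof (cases "\<exists>z\<in>V. removal_gain V E z > 0")
    case True
    then obtain z where z: "z \<in> V" "removal_gain V E z > 0" by blast
    obtain S' where S': "S' \<subseteq> V - {z}" "induced_forest S' E"
      "forest_weight (V - {z}) E \<le> real (card S')"
      using exists_induced_forest_weight[of "V - {z}" E] psubset.hyps(1) assms(2,3) by blast
    obtain S where "S \<subseteq> V" "induced_forest S E"
      "real (card S') - forest_weight (V - {z}) E + removal_gain V E z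
         \<le> real (card S) - forest_weight V E"
      by (rule induced_forest_removal_step[OF psubset.hyps(1) assms(2) z(1) S'(1,2)])
    with S'(3) z(2) show ?thesis by (intro psubset.prems(1)) auto
  next
    case False
    then have gain0: "removal_gain V E z = 0" if "z \<in> V" for z
      using removal_gain_eq_0_if_nonpos[OF psubset.hyps(1) assms(3)] that by force
    \<comment> \<open>delete a vertex off the induced path a c b and use the strict bound for the rest\<close>
    show ?thesis
    proof (cases "V = {a, b, c}")
      case True
      then show ?thesis
        using psubset.prems(1) induced_forest_non_adjacent_triple[OF assms(2,3) abc(7)]
          forest_weight_path_less_card[OF assms(2,3) abc(4-6)] by blast
    next
      case False
      then obtain z where z: "z \<in> V" "z \<notin> {a, b, c}" using abc(1-3) by blast
      have "\<not> cluster_graph (V - {z}) E" using abc z(2) unfolding cluster_graph_def by blast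
      then obtain S' where S': "S' \<subseteq> V - {z}" "induced_forest S' E"
        "forest_weight (V - {z}) E < real (card S')"
        using psubset.IH[of "V - {z}"] z(1) by blast
      obtain S where "S \<subseteq> V" "induced_forest S E"
        "real (card S') - forest_weight (V - {z}) E + removal_gain V E z
           \<le> real (card S) - forest_weight V E"
        by (rule induced_forest_removal_step[OF psubset.hyps(1) assms(2) z(1) S'(1,2)])
      with S'(3) gain0[OF z(1)] show ?thesis by (intro psubset.prems(1)) auto
    qed
  qed
qed

section \<open>Cluster graphs\<close>

definition closed_nbhd :: "'a set \<Rightarrow> ('a \<Rightarrow> 'a \<Rightarrow> bool) \<Rightarrow> 'a \<Rightarrow> 'a set" where
  "closed_nbhd V E v = insert v {u \<in> V. E v u}"

lemma closed_nbhd_subset: "v \<in> V \<Longrightarrow> closed_nbhd V E v \<subseteq> V"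
  unfolding closed_nbhd_def by auto

lemma card_closed_nbhd:
  assumes "simple_graph V E"
  shows "card (closed_nbhd V E v) = deg V E v + 1"
  using simple_graphD(1,3)[OF assms] unfolding closed_nbhd_def deg_def by (simp add: irreflpD)

lemma closed_nbhd_eq:
  assumes "simple_graph V E" "cluster_graph V E" "u \<in> closed_nbhd V E v"
  shows "closed_nbhd V E u = closed_nbhd V E v"
proof -
  note inV = simple_graphD(4,5)[OF assms(1)]
  have sym: "\<And>x y. E x y \<Longrightarrow> E y x" using simple_graphD(2)[OF assms(1)] by (rule sympD)
  have trans: "\<And>x y z. E x y \<Longrightarrow> E y z \<Longrightarrow> x \<noteq> z \<Longrightarrow> E x z"
    using assms(2) inV unfolding cluster_graph_def by blast
  show ?thesis
    using assms(3) unfolding closed_nbhd_def by (auto intro: inV sym trans)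
qed

lemma cluster_graph_adj_iff:
  assumes "simple_graph V E" "cluster_graph V E" "u \<in> V" "w \<in> V"
  shows "E u w \<longleftrightarrow> u \<noteq> w \<and> closed_nbhd V E u = closed_nbhd V E w"
proof
  assume "E u w"
  then show "u \<noteq> w \<and> closed_nbhd V E u = closed_nbhd V E w"
    using closed_nbhd_eq[OF assms(1,2), of w u] assms(4) simple_graphD(3)[OF assms(1)]
    unfolding closed_nbhd_def by (auto simp: irreflp_def)
next
  assume "u \<noteq> w \<and> closed_nbhd V E u = closed_nbhd V E w"
  then show "E u w" unfolding closed_nbhd_def by auto
qed

lemma is_clique_closed_nbhd:
  assumes "simple_graph V E" "cluster_graph V E" "v \<in> V"
  shows "is_clique (closed_nbhd V E v) E"
  unfolding is_clique_def
  using cluster_graph_adj_iff[OF assms(1,2)] closed_nbhd_eq[OF assms(1,2)]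
    closed_nbhd_subset[OF assms(3)]
  by blast

lemma component_eq_closed_nbhd:
  assumes "simple_graph V E" "cluster_graph V E" "v \<in> V"
  shows "component V E v = closed_nbhd V E v"
proof
  let ?R = "\<lambda>x y. E x y \<and> x \<in> V \<and> y \<in> V"
  have "?R\<^sup>*\<^sup>* v u \<Longrightarrow> u \<in> closed_nbhd V E v" for u
  proof (induction rule: rtranclp_induct)
    case (step y z)
    then have "z \<in> closed_nbhd V E y" unfolding closed_nbhd_def by auto
    then show ?case using closed_nbhd_eq[OF assms(1,2) step.IH] by simp
  qed (simp add: closed_nbhd_def)
  then show "component V E v \<subseteq> closed_nbhd V E v" unfolding component_def by auto
  show "closed_nbhd V E v \<subseteq> component V E v"
    unfolding closed_nbhd_def component_def using assms(3) by (auto intro: r_into_rtranclp)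
qed

lemma cluster_graph_components:
  assumes "simple_graph V E" "cluster_graph V E" "\<forall>v\<in>V. deg V E v \<in> D"
  shows "\<forall>C\<in>components V E. card C \<in> Suc ` D \<and> is_clique C E"
  using assms card_closed_nbhd[OF assms(1)] component_eq_closed_nbhd[OF assms(1,2)]
    is_clique_closed_nbhd[OF assms(1,2)]
  unfolding components_def by auto

lemma closed_nbhd_fibre:
  assumes "simple_graph V E" "cluster_graph V E" "w \<in> V"
  shows "{v \<in> V. closed_nbhd V E v = closed_nbhd V E w} = closed_nbhd V E w"
  using closed_nbhd_eq[OF assms(1,2)] closed_nbhd_subset[OF assms(3)]
  unfolding closed_nbhd_def by blast

lemma sum_closed_nbhd:
  fixes f :: "'a set \<Rightarrow> 'b::comm_semiring_1"
  assumes "simple_graph V E" "cluster_graph V E"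
  shows "(\<Sum>v\<in>V. f (closed_nbhd V E v))
    = (\<Sum>X\<in>closed_nbhd V E ` V. of_nat (card X) * f X)"
proof -
  have "(\<Sum>v\<in>V. f (closed_nbhd V E v))
      = (\<Sum>X\<in>closed_nbhd V E ` V. \<Sum>v\<in>{v \<in> V. closed_nbhd V E v = X}. f (closed_nbhd V E v))"
    using simple_graphD(1)[OF assms(1)] by (rule sum.image_gen)
  also have "\<dots> = (\<Sum>X\<in>closed_nbhd V E ` V. of_nat (card X) * f X)"
    using closed_nbhd_fibre[OF assms] by (intro sum.cong) auto
  finally show ?thesis .
qed

lemma forest_weight_cluster_graph:
  assumes "simple_graph V E" "cluster_graph V E" "\<forall>v\<in>V. deg V E v \<ge> 1"
  shows "forest_weight V E = 2 * card (closed_nbhd V E ` V)"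
proof -
  have "forest_weight V E = (\<Sum>v\<in>V. 2 / real (card (closed_nbhd V E v)))"
    unfolding forest_weight_def aks_weight_def using assms(3) card_closed_nbhd[OF assms(1)]
    by (intro sum.cong) (auto simp: add.commute)
  also have "\<dots> = (\<Sum>X\<in>closed_nbhd V E ` V. real (card X) * (2 / real (card X)))"
    by (rule sum_closed_nbhd[OF assms(1,2)])
  also have "\<dots> = (\<Sum>X\<in>closed_nbhd V E ` V. 2)"
    using card_closed_nbhd[OF assms(1)] by (intro sum.cong) auto
  finally show ?thesis by simp
qed

section \<open>Isomorphism with G_{n,t}\<close>

lemma graph_iso_colour_classes:
  assumes "finite V" "finite W"
    and "\<forall>u\<in>V. \<forall>w\<in>V. E u w \<longleftrightarrow> u \<noteq> w \<and> c u = c w"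
    and "\<forall>i\<in>W. \<forall>j\<in>W. F i j \<longleftrightarrow> i \<noteq> j \<and> c' i = c' j"
    and "\<And>k. card {v \<in> V. c v = k} = card {w \<in> W. c' w = k}"
  shows "graph_iso V E W F"
proof -
  have "\<forall>k. \<exists>h. bij_betw h {v \<in> V. c v = k} {w \<in> W. c' w = k}"
    using assms(1,2,5) by (intro allI finite_same_card_bij) auto
  then obtain h where h: "\<And>k. bij_betw (h k) {v \<in> V. c v = k} {w \<in> W. c' w = k}" by metis
  define f where "f v = h (c v) v" for v
  have "bij_betw f (\<Union>k. {v \<in> V. c v = k}) (\<Union>k. {w \<in> W. c' w = k})"
  proof (rule bij_betw_UNION_disjoint)
    show "disjoint_family_on (\<lambda>k. {w \<in> W. c' w = k}) UNIV"
      by (auto simp: disjoint_family_on_def)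
    show "bij_betw f {v \<in> V. c v = k} {w \<in> W. c' w = k}" for k
      using h[of k] unfolding f_def by (rule bij_betw_cong[THEN iffD1, rotated]) auto
  qed
  moreover have "(\<Union>k. {v \<in> V. c v = k}) = V" "(\<Union>k. {w \<in> W. c' w = k}) = W" by auto
  ultimately have bij: "bij_betw f V W" by simp
  have colour: "c' (f v) = c v" if "v \<in> V" for v
    using bij_betwE[OF h[of "c v"]] that unfolding f_def by auto
  have "E u w \<longleftrightarrow> F (f u) (f w)" if "u \<in> V" "w \<in> V" for u w
    using that assms(3,4) colour bij_betwE[OF bij] bij_betw_imp_inj_on[OF bij]
    by (auto simp: inj_on_eq_iff)
  then show ?thesis unfolding graph_iso_def using bij by blast
qed

lemma card_residue_class:
  fixes n t k :: nat
  assumes "k < t"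
  shows "card {j \<in> {0..<n}. j mod t = k} = (if k < n mod t then n div t + 1 else n div t)"
proof -
  define q r where "q = n div t" and "r = n mod t"
  define m where "m = (if k < r then q + 1 else q)"
  have n: "n = q * t + r" and "r < t" using assms by (simp_all add: q_def r_def)
  have below: "i * t + k < n \<longleftrightarrow> i < m" for i
  proof (cases i q rule: linorder_cases)
    case less
    then have "i * t + t \<le> q * t" using mult_le_mono1[of "i + 1" q t] by simp
    then show ?thesis using less assms n unfolding m_def by simp
  next
    case greater
    then have "q * t + t \<le> i * t" using mult_le_mono1[of "q + 1" i t] by simp
    then show ?thesis using greater \<open>r < t\<close> n unfolding m_def by simp
  qed (simp add: n m_def)
  have "{j \<in> {0..<n}. j mod t = k} = (\<lambda>i. i * t + k) ` {..<m}"
  proof (intro equalityI subsetI)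
    fix j assume "j \<in> {j \<in> {0..<n}. j mod t = k}"
    then have "j div t * t + k = j" "j < n" using div_mult_mod_eq[of j t] by auto
    then show "j \<in> (\<lambda>i. i * t + k) ` {..<m}"
      using below[of "j div t"] by (intro image_eqI[of _ _ "j div t"]) auto
  next
    fix x assume "x \<in> (\<lambda>i. i * t + k) ` {..<m}"
    then obtain i where "i < m" "x = i * t + k" by blast
    then show "x \<in> {j \<in> {0..<n}. j mod t = k}" using below[of i] assms by simp
  qed
  moreover have "inj_on (\<lambda>i. i * t + k) {..<m}" using assms by (intro inj_onI) simp
  ultimately show ?thesis by (simp add: card_image m_def q_def r_def)
qed

lemma obtain_bij_betw_prefix:
  assumes "finite P" "A \<subseteq> P"
  obtains f where "bij_betw f P {0..<card P}" "\<And>X. X \<in> P \<Longrightarrow> X \<in> A \<longleftrightarrow> f X < card A"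
proof -
  obtain g where g: "bij_betw g A {0..<card A}"
    using finite_same_card_bij[of A "{0..<card A}"] finite_subset[OF assms(2,1)] by auto
  have "card (P - A) = card {card A..<card P}"
    using assms by (simp add: card_Diff_subset finite_subset)
  then obtain h where h: "bij_betw h (P - A) {card A..<card P}"
    using finite_same_card_bij[of "P - A" "{card A..<card P}"] assms(1) by auto
  have "card A \<le> card P" using assms by (rule card_mono)
  then have "bij_betw (\<lambda>X. if X \<in> A then g X else h X) P {0..<card P}"
    using bij_betw_disjoint_Un[OF g h] assms(2) by (simp add: Un_absorb1 ivl_disj_un_two(3))
  moreover have "X \<in> A \<longleftrightarrow> (if X \<in> A then g X else h X) < card A" if "X \<in> P" for X
  proof (cases "X \<in> A")
    case False
    then have "h X \<in> {card A..<card P}" using bij_betwE[OF h] that by blast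
    then show ?thesis using False by simp
  qed (use bij_betwE[OF g] in auto)
  ultimately show ?thesis using that by blast
qed

lemma card_large_parts:
  fixes s :: "'b \<Rightarrow> nat"
  assumes "finite P" "card P = t" "(\<Sum>X\<in>P. s X) = n" "\<forall>X\<in>P. s X \<in> {n div t, n div t + 1}"
  shows "card {X \<in> P. s X = n div t + 1} = n mod t"
proof -
  have "n = (\<Sum>X\<in>P. s X)" using assms(3) by simp
  also have "\<dots> = (\<Sum>X\<in>P. n div t + (if s X = n div t + 1 then 1 else 0))"
    using assms(4) by (intro sum.cong) auto
  also have "\<dots> = n div t * t + card {X \<in> P. s X = n div t + 1}"
    using assms(1,2) by (simp add: sum.distrib sum.If_cases Int_def)
  finally show ?thesis by (metis add_left_imp_eq div_mult_mod_eq)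
qed

lemma cluster_graph_iso_Gnt:
  assumes sg: "simple_graph V E" and cl: "cluster_graph V E" and "card V = n" "0 < t"
    and blocks: "card (closed_nbhd V E ` V) = t"
    and sizes: "\<forall>v\<in>V. card (closed_nbhd V E v) \<in> {n div t, n div t + 1}"
  shows "graph_iso V E {0..<n} (Gnt_adj t)"
proof -
  let ?N = "closed_nbhd V E" and ?q = "n div t"
  define P where "P = ?N ` V"
  define B where "B = {X \<in> P. card X = ?q + 1}"
  have fin: "finite V" "finite P" using simple_graphD(1)[OF sg] unfolding P_def by auto
  have "(\<Sum>X\<in>P. card X) = n"
    using sum_closed_nbhd[OF sg cl, of "\<lambda>_. 1::nat"] \<open>card V = n\<close> unfolding P_def by simp
  then have "card B = n mod t"
    using card_large_parts[OF fin(2), of t card n] blocks sizes unfolding P_def B_def by auto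
  \<comment> \<open>colour the cliques by 0..<t, the n mod t large ones by the colours below n mod t,
    exactly as the residue classes modulo t in G_{n,t}\<close>
  then obtain f where f: "bij_betw f P {0..<t}" and big: "\<And>X. X \<in> P \<Longrightarrow> X \<in> B \<longleftrightarrow> f X < n mod t"
    using obtain_bij_betw_prefix[OF fin(2), of B] blocks unfolding P_def B_def by auto
  show ?thesis
  proof (rule graph_iso_colour_classes[where c = "\<lambda>v. f (?N v)" and c' = "\<lambda>j. j mod t"])
    show "\<forall>u\<in>V. \<forall>w\<in>V. E u w \<longleftrightarrow> u \<noteq> w \<and> f (?N u) = f (?N w)"
      using cluster_graph_adj_iff[OF sg cl] bij_betw_imp_inj_on[OF f] unfolding P_def
      by (auto simp: inj_on_eq_iff)
    show "\<forall>i\<in>{0..<n}. \<forall>j\<in>{0..<n}. Gnt_adj t i j \<longleftrightarrow> i \<noteq> j \<and> i mod t = j mod t"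
      unfolding Gnt_adj_def by simp
    show "card {v \<in> V. f (?N v) = k} = card {j \<in> {0..<n}. j mod t = k}" for k
    proof (cases "k < t")
      case True
      then obtain X where X: "X \<in> P" "f X = k"
        using bij_betw_imp_surj_on[OF f] by (metis atLeastLessThan_iff imageE zero_le)
      then obtain w where w: "w \<in> V" "X = ?N w" unfolding P_def by blast
      have "{v \<in> V. f (?N v) = k} = {v \<in> V. ?N v = X}"
        using X bij_betw_imp_inj_on[OF f] unfolding P_def by (auto simp: inj_on_eq_iff)
      also have "\<dots> = X" using closed_nbhd_fibre[OF sg cl w(1)] w(2) by simp
      moreover have "X \<in> B \<longleftrightarrow> k < n mod t" using big[OF X(1)] X(2) by simp
      moreover have "card X \<in> {?q, ?q + 1}" using sizes w by auto
      ultimately show ?thesis using card_residue_class[OF True, of n] X(1) unfolding B_def by auto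
    next
      case False
      then have "{v \<in> V. f (?N v) = k} = {}" using bij_betwE[OF f] unfolding P_def by fastforce
      moreover have "{j \<in> {0..<n}. j mod t = k} = {}"
        using False \<open>0 < t\<close> mod_less_divisor[of t] by fastforce
      ultimately show ?thesis by (simp only: card.empty)
    qed
  qed (use fin in auto)
qed

lemma ceiling_Suc_divide:
  assumes "t > 0"
  shows "\<lceil>real (Suc n) / real t\<rceil> = int (n div t) + 1"
proof -
  have "n div t * t \<le> n" "n < n div t * t + t"
    using div_mult_mod_eq[of n t] mod_less_divisor[OF assms, of n] by linarith+
  then have "real (n div t * t) < real (Suc n)" "real (Suc n) \<le> real (n div t * t + t)"
    by linarith+
  then show ?thesis using assms by (simp add: ceiling_eq_iff field_simps)
qed

lemma g_Suc:
  assumes "t > 0" "4 * t \<le> n"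
  shows "g (Suc n) t = g n t + n div t"
  using assms ceiling_Suc_divide[OF assms(1), of n] by (simp del: g.simps add: g.simps[of "Suc n"])

lemma g_closed_form:
  assumes "t > 0" "4 * t \<le> n"
  shows "2 * g n t + t * (n div t) * (n div t + 1) = 2 * (n div t) * n"
  using assms(2)
proof (induction n rule: dec_induct)
  case base
  then show ?case using assms(1) by simp
next
  case (step n)
  define q where "q = n div t"
  have IH: "2 * g n t + t * q * (q + 1) = 2 * q * n" using step.IH unfolding q_def .
  have g: "g (Suc n) t = g n t + q" using g_Suc[OF assms(1) step(1)] unfolding q_def .
  show ?case
  proof (cases "Suc n mod t = 0")
    case True
    then have div: "Suc n div t = q + 1" unfolding q_def by (simp add: div_Suc)
    then have Sn: "t * (q + 1) = Suc n"
      using True div_mult_mod_eq[of "Suc n" t] by (simp add: mult.commute)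
    have "2 * g (Suc n) t + t * (Suc n div t) * (Suc n div t + 1)
        = (2 * g n t + t * q * (q + 1)) + 2 * q + 2 * (t * (q + 1))"
      unfolding g div by (simp add: algebra_simps del: g.simps)
    also have "\<dots> = 2 * (Suc n div t) * Suc n" unfolding IH Sn div by (simp add: algebra_simps)
    finally show ?thesis .
  next
    case False
    then have div: "Suc n div t = q" unfolding q_def by (simp add: div_Suc)
    have "2 * g (Suc n) t + t * (Suc n div t) * (Suc n div t + 1)
        = (2 * g n t + t * q * (q + 1)) + 2 * q"
      unfolding g div by (simp add: algebra_simps del: g.simps)
    also have "\<dots> = 2 * (Suc n div t) * Suc n" unfolding IH div by (simp add: algebra_simps)
    finally show ?thesis .
  qed
qed

section \<open>Counting edges\<close>

text \<open>For d > 0 the excess is 2 (d - q) (d - q + 1) / (d + 1): the secant of the convex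
  function 2 / (d + 1) through d = q - 1 and d = q lies below it at all other integers.\<close>
lemma aks_weight_secant:
  fixes q d :: nat
  assumes "q \<ge> 3"
  defines "excess \<equiv> 2 * real d + real q * (real q + 1) * aks_weight d - 4 * real q"
  shows "0 \<le> excess" and "excess = 0 \<longleftrightarrow> d + 1 = q \<or> d = q \<or> (d = 0 \<and> q = 3)"
proof -
  define x where "x = real d - real q"
  have "x * (x + 1) \<ge> 0"
    by (cases "x \<ge> 0") (auto simp: x_def intro: mult_nonneg_nonneg mult_nonpos_nonpos)
  moreover have "x * (x + 1) = 0 \<longleftrightarrow> d + 1 = q \<or> d = q" unfolding x_def by auto
  moreover have "real q * (real q - 3) \<ge> 0" "real q * (real q - 3) = 0 \<longleftrightarrow> q = 3"
    using assms(1) by auto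
  moreover have "excess =
      (if d = 0 then real q * (real q - 3) else 2 * (x * (x + 1)) / (real d + 1))"
  proof (cases "d = 0")
    case False
    then have "aks_weight d = 2 / (real d + 1)" unfolding aks_weight_def by auto
    with False show ?thesis unfolding excess_def x_def by (simp add: field_simps)
  qed (simp add: excess_def aks_weight_def algebra_simps)
  ultimately show "0 \<le> excess" and "excess = 0 \<longleftrightarrow> d + 1 = q \<or> d = q \<or> (d = 0 \<and> q = 3)"
    by auto
qed

lemma edges_forest_weight_bound:
  assumes sg: "simple_graph V E" and "q \<ge> 3"
  defines "lhs \<equiv> 4 * real q * real (card V)"
    and "rhs \<equiv> 4 * real (card (edges V E)) + real q * (real q + 1) * forest_weight V E"
  shows "lhs \<le> rhs"
    and "lhs = rhs \<Longrightarrow> \<forall>v\<in>V. deg V E v + 1 = q \<or> deg V E v = q \<or> (deg V E v = 0 \<and> q = 3)"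
proof -
  define excess where "excess v =
    2 * real (deg V E v) + real q * (real q + 1) * aks_weight (deg V E v) - 4 * real q" for v
  have "(\<Sum>v\<in>V. real (deg V E v)) = 2 * real (card (edges V E))"
    using handshake[OF sg] by (metis of_nat_mult of_nat_numeral of_nat_sum)
  then have sum: "(\<Sum>v\<in>V. excess v) = rhs - lhs"
    unfolding excess_def lhs_def rhs_def forest_weight_def
    by (simp add: sum_subtractf sum.distrib sum_distrib_left[symmetric])
  have nonneg: "excess v \<ge> 0" for v
    using aks_weight_secant(1)[OF assms(2)] unfolding excess_def .
  then show "lhs \<le> rhs" using sum sum_nonneg[of V excess] by simp
  assume "lhs = rhs"
  then have "\<forall>v\<in>V. excess v = 0"
    using sum sum_nonneg_eq_0_iff[OF simple_graphD(1)[OF sg], of excess] nonneg by simp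
  then show "\<forall>v\<in>V. deg V E v + 1 = q \<or> deg V E v = q \<or> (deg V E v = 0 \<and> q = 3)"
    using aks_weight_secant(2)[OF assms(2)] unfolding excess_def by simp
qed

lemma forest_weight_le:
  assumes "simple_graph V E" "\<not> has_induced_forest V E (Suc k)"
  shows "forest_weight V E \<le> real k"
proof -
  obtain S where S: "S \<subseteq> V" "induced_forest S E" "forest_weight V E \<le> real (card S)"
    using simple_graphD(1-3)[OF assms(1)] by (rule exists_induced_forest_weight)
  moreover have "card S \<le> k" using card_induced_forest_le[OF assms(2) S(1,2)] .
  ultimately show ?thesis by linarith
qed

lemma cluster_graph_if_forest_weight_ge:
  assumes "simple_graph V E" "\<not> has_induced_forest V E (Suc k)" "real k \<le> forest_weight V E"
  shows "cluster_graph V E"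
proof (rule ccontr)
  assume "\<not> cluster_graph V E"
  with simple_graphD(1-3)[OF assms(1)] obtain S
    where S: "S \<subseteq> V" "induced_forest S E" "forest_weight V E < real (card S)"
    by (rule exists_induced_forest_weight_strict)
  moreover have "card S \<le> k" using card_induced_forest_le[OF assms(2) S(1,2)] .
  ultimately show False using assms(3) by linarith
qed

lemma edges_bound_below_4t:
  assumes sg: "simple_graph V E" and no_forest: "\<not> has_induced_forest V E (2 * t + 1)"
    and "card V = n" "n < 4 * t"
  shows "g n t \<le> card (edges V E)"
    and "card (edges V E) = g n t \<Longrightarrow> \<forall>C\<in>components V E. card C \<in> {1, 3, 4} \<and> is_clique C E"
proof -
  let ?m = "card (edges V E)" and ?H = "forest_weight V E"
  have H: "?H \<le> 2 * real t" using forest_weight_le[OF sg] no_forest by force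
  have bound: "12 * real n \<le> 4 * real ?m + 12 * ?H"
    using edges_forest_weight_bound(1)[OF sg, of 3] \<open>card V = n\<close> by simp
  show "g n t \<le> ?m"
  proof (cases "n < 2 * t")
    case False
    then have "real (g n t) = 3 * real n - 6 * real t" using \<open>n < 4 * t\<close> by (simp add: of_nat_diff)
    then show ?thesis using bound H by linarith
  qed simp
  assume "?m = g n t"
  have "cluster_graph V E \<and> (\<forall>v\<in>V. deg V E v \<in> {0, 2, 3})"
  proof (cases "n < 2 * t")
    case True
    then have "(\<Sum>v\<in>V. deg V E v) = 0" using handshake[OF sg] \<open>?m = g n t\<close> by simp
    then have "\<forall>v\<in>V. deg V E v = 0" using simple_graphD(1)[OF sg] by simp
    then have "\<forall>v\<in>V. {u \<in> V. E v u} = {}" using simple_graphD(1)[OF sg] unfolding deg_def by simp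
    then show ?thesis using \<open>\<forall>v\<in>V. deg V E v = 0\<close> unfolding cluster_graph_def by blast
  next
    case False
    then have "real ?m = 3 * real n - 6 * real t"
      using \<open>?m = g n t\<close> \<open>n < 4 * t\<close> by (simp add: of_nat_diff)
    then have "?H = 2 * real t" "12 * real n = 4 * real ?m + 12 * ?H" using bound H by linarith+
    then show ?thesis
      using cluster_graph_if_forest_weight_ge[OF sg, of "2 * t"] no_forest
        edges_forest_weight_bound(2)[OF sg, of 3] \<open>card V = n\<close> by auto
  qed
  then show "\<forall>C\<in>components V E. card C \<in> {1, 3, 4} \<and> is_clique C E"
    using cluster_graph_components[OF sg, of "{0, 2, 3}"] by simp
qed

lemma edges_bound_from_4t:
  assumes sg: "simple_graph V E" and no_forest: "\<not> has_induced_forest V E (2 * t + 1)"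
    and "card V = n" "0 < t" "4 * t \<le> n"
  shows "g n t \<le> card (edges V E)"
    and "card (edges V E) = g n t \<Longrightarrow> graph_iso V E {0..<n} (Gnt_adj t)"
proof -
  let ?m = "card (edges V E)" and ?H = "forest_weight V E"
  define q where "q = n div t"
  define K where "K = real q * (real q + 1)"
  have "4 \<le> q" unfolding q_def using \<open>0 < t\<close> \<open>4 * t \<le> n\<close>
    by (metis div_le_mono nonzero_mult_div_cancel_right not_gr0)
  then have "K > 0" unfolding K_def by simp
  have H: "?H \<le> 2 * real t" using forest_weight_le[OF sg] no_forest by force
  then have KH: "K * ?H \<le> K * (2 * real t)" using \<open>K > 0\<close> by simp
  have bound: "4 * real q * real n \<le> 4 * real ?m + K * ?H"
    using edges_forest_weight_bound(1)[OF sg, of q] \<open>4 \<le> q\<close> \<open>card V = n\<close> unfolding K_def by simp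
  have "real (2 * g n t + t * q * (q + 1)) = real (2 * q * n)"
    using g_closed_form[OF \<open>0 < t\<close> \<open>4 * t \<le> n\<close>] unfolding q_def by presburger
  then have g: "4 * real (g n t) = 4 * real q * real n - K * (2 * real t)"
    unfolding K_def by (simp add: algebra_simps)
  show "g n t \<le> ?m" using bound KH g by linarith
  assume "?m = g n t"
  then have "K * ?H = K * (2 * real t)" "4 * real q * real n = 4 * real ?m + K * ?H"
    using bound KH g by linarith+
  then have "?H = 2 * real t" and degs: "\<forall>v\<in>V. deg V E v + 1 = q \<or> deg V E v = q"
    using \<open>K > 0\<close> edges_forest_weight_bound(2)[OF sg, of q] \<open>4 \<le> q\<close> \<open>card V = n\<close>
    unfolding K_def by auto
  then have cl: "cluster_graph V E"
    using cluster_graph_if_forest_weight_ge[OF sg, of "2 * t"] no_forest by simp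
  have "card (closed_nbhd V E ` V) = t"
    using forest_weight_cluster_graph[OF sg cl] degs \<open>4 \<le> q\<close> \<open>?H = 2 * real t\<close> by force
  moreover have "\<forall>v\<in>V. card (closed_nbhd V E v) \<in> {n div t, n div t + 1}"
    using degs card_closed_nbhd[OF sg] unfolding q_def by auto
  ultimately show "graph_iso V E {0..<n} (Gnt_adj t)"
    using cluster_graph_iso_Gnt[OF sg cl \<open>card V = n\<close> \<open>0 < t\<close>] by blast
qed

theorem theorem4p1:
  fixes V :: "'a set" and E :: "'a \<Rightarrow> 'a \<Rightarrow> bool" and n t :: nat
  assumes "n \<ge> 1" and "t \<ge> 1"
    and "simple_graph V E" and "card V = n"
    and "\<not> has_induced_forest V E (2*t + 1)"
  shows "card (edges V E) \<ge> g n t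
     \<and> (card (edges V E) = g n t \<and> n < 4*t \<longrightarrow>
           (\<forall>C\<in>components V E. card C \<in> {1, 3, 4} \<and> is_clique C E))
     \<and> (card (edges V E) = g n t \<and> n \<ge> 4*t \<longrightarrow>
           graph_iso V E {0..<n} (Gnt_adj t))"
proof (cases "n < 4 * t")
  case True
  then show ?thesis using edges_bound_below_4t[OF assms(3,5,4) True] by auto
next
  case False
  then show ?thesis using edges_bound_from_4t[OF assms(3,5,4)] assms(2) by auto
qed

end
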